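(* Let $V=(\mathbb F_2)^n$ with $n=bs$, decomposed into bricks $V=V_1\oplus\cdots\oplus V_b$, $\dim V_j=s$. Let $r\ge2$ and $\rho_1,\dots,\rho_r\in\mathrm{Sym}(V)$, and let $\Phi$ be the $r$-round Feistel network whose $i$-th round applies the Feistel operator $\bar\rho_i$. Assume that for every $1\le i\le r$, $0\rho_i=0$ and $\rho_i=\gamma_i\lambda_i$, where \begin{enumerate} \item[a)] $\gamma_i$ is a parallel map whose S-boxes are weakly $2^\delta$-uniform and strongly $\delta$-anti-invariant, for some $\delta<s$; \item[b)] $\lambda_i$ is a linear strongly proper diffusion layer. \end{enumerate} Suppose there exists a sequence of $r+1$ non-trivial linear partitions $\mathcal L(\mathcal U_1),\dots,\mathcal L(\mathcal U_{r+1})$ of $V\times V$, where each $\mathcal U_i$ is a proper non-trivial subgroup of $V\times V$ and $\mathcal L(\mathcal U_i)\bar\rho_i=\mathcal L(\mathcal U_{i+1})$ for all $1\le i\le r$. For each $i$ let $A_i=\{a\in V\mid (a,c)\in\mathcal U_i\text{ for some }c\in V\}$ and $D_i=\{d\in V\mid (0,d)\in\mathcal U_i\}$. Then none of the following conditions holds: \begin{enumerate} \item there exists $1\le i\le r-1$ such that $\mathcal L(\mathcal U_{i+1})\bar\rho_{i+1}=\mathcal L(\mathcal U_i)$; \item there exists $1\le i\le r-1$ such that $\mathcal U_i=A_i\times D_i$, $\mathcal U_{i+1}=A_{i+1}\times D_{i+1}$ and $\mathcal U_{i+2}=A_{i+2}\times D_{i+2}$; \item there exists $1\le i\le r$ such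 that $D_i=\{0\}$ and $D_{i+1}=\{0\}$; \item there exists $1\le i\le r$ such that $A_i=\{0\}$ and $A_{i+1}=\{0\}$. \end{enumerate}
   Context: Maps act on the right and are composed left to right ($\gamma\lambda$ means first $\gamma$, then $\lambda$); $+$ is bitwise XOR. The Feistel operator induced by $\rho\in\mathrm{Sym}(V)$ is $\bar\rho:V\times V\to V\times V$, $(x_1,x_2)\bar\rho=(x_2,\ x_1+x_2\rho)$. A wall is a subspace $\bigoplus_{j\in I}V_j$ with $\emptyset\ne I\subsetneq\{1,\dots,b\}$. A parallel map is $\gamma\in\mathrm{Sym}(V)$ acting brickwise, $\gamma=(\gamma^{(1)},\dots,\gamma^{(b)})$ with $\gamma^{(j)}\in\mathrm{Sym}(V_j)$ (its S-boxes, viewed as permutations of $(\mathbb F_2)^s$). A linear $\lambda\in\mathrm{GL}(V)$ is a strongly proper diffusion layer if there are no walls $W,W'$ with $W\lambda=W'$. A map $f\in\mathrm{Sym}((\mathbb F_2)^s)$ is weakly $d$-uniform if for each $a\ne0$, $|\{xf+(x+a)f\mid x\in(\mathbb F_2)^s\}|>2^{s-1}/d$. For $1\le\epsilon<s$, $f$ with $0f=0$ is strongly $\epsilon$-anti-invariant if for all proper non-trivial subspaces $U,W$ of $(\mathbb F_2)^s$, $Uf=W$ implies $\dim U=\dim W<s-\epsilon$. For a subgroup $\mathcal U$ of $V\times V$, $\mathcal L(\mathcal U)=\{\mathcal U+v\mid v\in V\times V\}$ (non-trivial if neither the partition into singletons nor $\{V\times V\}$), and $\mathcal A f=\{Af\mid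 A\in\mathcal A\}$ for a partition $\mathcal A$. *)

theory Defs
  imports "HOL-Analysis.Analysis" "HOL-Library.Z2"
begin

text \<open>The space V = (F_2)^n with n = b*s is modelled as (bit^'s)^'b: the b bricks V_j
  are the components indexed by 'b, each brick is (F_2)^s = bit^'s.
  Maps act on the right; the composition "first gamma, then lambda" is lambda o gamma.\<close>

type_synonym ('s,'b) blockvec = "bit ^ 's ^ 'b"

definition feistel :: "('v::plus \<Rightarrow> 'v) \<Rightarrow> 'v \<times> 'v \<Rightarrow> 'v \<times> 'v" where
  "feistel \<rho> = (\<lambda>(x1, x2). (x2, x1 + \<rho> x2))"

definition wall :: "'b::finite set \<Rightarrow> ('a::zero ^ 'b) set" where
  "wall I = {x. \<forall>j. j \<notin> I \<longrightarrow> x $ j = 0}"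

definition is_wall :: "('a::zero ^ 'b::finite) set \<Rightarrow> bool" where
  "is_wall W \<longleftrightarrow> (\<exists>I. I \<noteq> {} \<and> I \<noteq> UNIV \<and> W = wall I)"

definition parallel_with :: "('b::finite \<Rightarrow> 'c \<Rightarrow> 'c) \<Rightarrow> ('c ^ 'b \<Rightarrow> 'c ^ 'b) \<Rightarrow> bool" where
  "parallel_with f \<gamma> \<longleftrightarrow> bij \<gamma> \<and> (\<forall>j. bij (f j)) \<and> (\<forall>x. \<gamma> x = (\<chi> j. f j (x $ j)))"

definition scaleV :: "bit \<Rightarrow> bit ^ 's::finite ^ 'b::finite \<Rightarrow> bit ^ 's ^ 'b" where
  "scaleV c x = (\<chi> j. c *s (x $ j))"

definition strongly_proper_diffusion :: "(bit ^ 's::finite ^ 'b::finite \<Rightarrow> bit ^ 's ^ 'b) \<Rightarrow> bool" where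
  "strongly_proper_diffusion L \<longleftrightarrow>
     Vector_Spaces.linear scaleV scaleV L \<and> bij L \<and>
     \<not> (\<exists>W W'. is_wall W \<and> is_wall W' \<and> L ` W = W')"

definition weakly_uniform :: "real \<Rightarrow> (bit ^ 's::finite \<Rightarrow> bit ^ 's) \<Rightarrow> bool" where
  "weakly_uniform d f \<longleftrightarrow>
     (\<forall>a. a \<noteq> 0 \<longrightarrow>
        real (card {f x + f (x + a) | x. True}) > 2 ^ (CARD('s) - 1) / d)"

definition strongly_anti_invariant :: "nat \<Rightarrow> (bit ^ 's::finite \<Rightarrow> bit ^ 's) \<Rightarrow> bool" where
  "strongly_anti_invariant \<epsilon> f \<longleftrightarrow>
     f 0 = 0 \<and>
     (\<forall>U W. vec.subspace U \<and> U \<noteq> {0} \<and> U \<noteq> UNIV \<and>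
            vec.subspace W \<and> W \<noteq> {0} \<and> W \<noteq> UNIV \<and> f ` U = W \<longrightarrow>
            vec.dim U = vec.dim W \<and> vec.dim W < CARD('s) - \<epsilon>)"

definition is_subgroup :: "'a::ab_group_add set \<Rightarrow> bool" where
  "is_subgroup U \<longleftrightarrow> 0 \<in> U \<and> (\<forall>x\<in>U. \<forall>y\<in>U. x + y \<in> U) \<and> (\<forall>x\<in>U. - x \<in> U)"

definition lin_partition :: "'a::plus set \<Rightarrow> 'a set set" where
  "lin_partition U = {(\<lambda>u. u + v) ` U | v. True}"

definition nontrivial_partition :: "'a set set \<Rightarrow> bool" where
  "nontrivial_partition P \<longleftrightarrow> P \<noteq> {{x} | x. True} \<and> P \<noteq> {UNIV}"

definition part_image :: "'a set set \<Rightarrow> ('a \<Rightarrow> 'b) \<Rightarrow> 'b set set" where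
  "part_image P f = (\<lambda>A. f ` A) ` P"

definition first_proj :: "('v \<times> 'v) set \<Rightarrow> 'v set" where
  "first_proj U = {a. \<exists>c. (a, c) \<in> U}"

definition zero_fibre :: "('v::zero \<times> 'v) set \<Rightarrow> 'v set" where
  "zero_fibre U = {d. (0, d) \<in> U}"

end

theory Submission
  imports Defs
begin

(* If the Feistel operator of rho maps the cosets of U onto those of U', comparing the images of U
   and of U + (0, x) shows that each derivative rho (c + x) + rho x + rho c, for c a second
   coordinate of an element of U, lies in B = {b | (b, 0) in U}.  Weak uniformity lets the
   derivative of every S-box activated by c take more than 2^(s-1-delta) values in its brick, and
   strong anti-invariance then forces the whole brick into any subgroup that the S-box layer maps
   onto a subgroup containing these derivatives.  So no derivative of rho vanishes identically;
   as B is the zero fibre of U', this excludes 3).  In a two-round cycle rho maps the fibre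
   D = {d | (0, d) in U} onto B and back, so both are walls and lambda maps one onto the other,
   which strong properness excludes; this gives 1).  Three consecutive products A x D force
   U_(i+2) = U_i, a cycle, giving 2); under 4) both projections of U_i vanish. *)

section \<open>Vectors over F_2\<close>

instance bit :: finite
proof
  have "UNIV = {0 :: bit, 1}"
    using bit_not_zero_iff by blast
  then show "finite (UNIV :: bit set)"
    by (metis finite.emptyI finite.insertI)
qed

lemma bit_vec_vec_diff_eq_add: "(x :: bit ^ 'n ^ 'm) - y = x + y"
  by (simp add: vec_eq_iff)

lemma bit_vec_exists_nonzero: "\<exists>x :: bit ^ 'n. x \<noteq> 0"
  by (rule exI[of _ "\<chi> i. 1"]) (simp add: vec_eq_iff)

lemma card_span_le:
  fixes B :: "(bit ^ 'n) set"
  assumes "finite B"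
  shows "card (vec.span B) \<le> 2 ^ card B"
  using assms
proof (induction B rule: finite_induct)
  case empty
  then show ?case by simp
next
  case (insert b B)
  have "vec.span (insert b B) \<subseteq> vec.span B \<union> (\<lambda>x. x + b) ` vec.span B"
  proof
    fix x assume "x \<in> vec.span (insert b B)"
    then obtain k :: bit where k: "x - k *s b \<in> vec.span B"
      by (auto simp: vec.span_insert)
    show "x \<in> vec.span B \<union> (\<lambda>x. x + b) ` vec.span B"
    proof (cases "k = 0")
      case True
      then show ?thesis using k by simp
    next
      case False
      then have "x = (x - k *s b) + b"
        by (simp add: vec_eq_iff)
      then show ?thesis using k by blast
    qed
  qed
  then have "card (vec.span (insert b B)) \<le> card (vec.span B) + card ((\<lambda>x. x + b) ` vec.span B)"
    by (meson card_Un_le card_mono finite le_trans)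
  also have "\<dots> \<le> 2 * card (vec.span B)"
    using card_image_le[of "vec.span B" "\<lambda>x. x + b"] by simp
  also have "\<dots> \<le> 2 ^ card (insert b B)"
    using insert.IH insert.hyps by simp
  finally show ?case .
qed

lemma card_subspace_le:
  fixes W :: "(bit ^ 'n) set"
  assumes "vec.subspace W"
  shows "card W \<le> 2 ^ vec.dim W"
proof -
  obtain B where B: "W \<subseteq> vec.span B" "card B = vec.dim W"
    using vec.basis_exists by blast
  have "card W \<le> card (vec.span B)"
    using B(1) by (rule card_mono[rotated]) simp
  also have "\<dots> \<le> 2 ^ card B"
    by (rule card_span_le) simp
  finally show ?thesis
    using B(2) by simp
qed

section \<open>Subgroups, linear partitions and Feistel operators\<close>

lemma is_subgroup_zero: "is_subgroup U \<Longrightarrow> 0 \<in> U"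
  by (simp add: is_subgroup_def)

lemma is_subgroup_add: "is_subgroup U \<Longrightarrow> x \<in> U \<Longrightarrow> y \<in> U \<Longrightarrow> x + y \<in> U"
  by (simp add: is_subgroup_def)

lemma is_subgroup_uminus: "is_subgroup U \<Longrightarrow> x \<in> U \<Longrightarrow> - x \<in> U"
  by (simp add: is_subgroup_def)

lemma is_subgroup_diff: "is_subgroup U \<Longrightarrow> x \<in> U \<Longrightarrow> y \<in> U \<Longrightarrow> x - y \<in> U"
  by (metis diff_conv_add_uminus is_subgroup_add is_subgroup_uminus)

lemma is_subgroup_sum: "is_subgroup U \<Longrightarrow> (\<And>i. i \<in> I \<Longrightarrow> g i \<in> U) \<Longrightarrow> sum g I \<in> U"
  by (induction I rule: infinite_finite_induct) (auto intro: is_subgroup_zero is_subgroup_add)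

lemma is_subgroup_vimage:
  assumes "Modules.additive f" "is_subgroup U"
  shows "is_subgroup (f -` U)"
  using assms by (simp add: is_subgroup_def additive.add additive.zero additive.minus)

lemma is_subgroup_translate:
  assumes "is_subgroup U" "v \<in> U"
  shows "(\<lambda>u. u + v) ` U = U"
proof
  show "(\<lambda>u. u + v) ` U \<subseteq> U"
    using assms by (auto intro: is_subgroup_add)
  show "U \<subseteq> (\<lambda>u. u + v) ` U"
  proof
    fix u assume "u \<in> U"
    then have "u - v \<in> U"
      using assms by (intro is_subgroup_diff)
    then show "u \<in> (\<lambda>u. u + v) ` U"
      by (rule rev_image_eqI) simp
  qed
qed

lemma part_image_lin_partition_translate:
  assumes "part_image (lin_partition U) \<phi> = lin_partition U'"
  obtains v where "\<phi> ` (\<lambda>u. u + w) ` U = (\<lambda>u. u + v) ` U'"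
proof -
  have "(\<lambda>u. u + w) ` U \<in> lin_partition U"
    unfolding lin_partition_def by blast
  then have "\<phi> ` (\<lambda>u. u + w) ` U \<in> lin_partition U'"
    using assms unfolding part_image_def by blast
  then show ?thesis
    using that unfolding lin_partition_def by blast
qed

lemma part_image_lin_partition_image:
  fixes \<phi> :: "'a::ab_group_add \<Rightarrow> 'b::ab_group_add"
  assumes chain: "part_image (lin_partition U) \<phi> = lin_partition U'"
    and U: "is_subgroup U" and U': "is_subgroup U'" and \<phi>0: "\<phi> 0 = 0"
  shows "\<phi> ` U = U'"
proof -
  obtain v where v: "\<phi> ` (\<lambda>u. u + 0) ` U = (\<lambda>u. u + v) ` U'"
    using chain by (rule part_image_lin_partition_translate)
  have "0 \<in> \<phi> ` U"
    using \<phi>0 is_subgroup_zero[OF U] by force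
  then obtain u where "u \<in> U'" "0 = u + v"
    using v by auto
  then have "v \<in> U'"
    using is_subgroup_uminus[OF U'] by (metis add.commute eq_neg_iff_add_eq_0)
  then show ?thesis
    using v is_subgroup_translate[OF U'] by simp
qed

lemma feistel_zero [simp]: "\<rho> 0 = 0 \<Longrightarrow> feistel \<rho> 0 = (0 :: 'v::monoid_add \<times> 'v)"
  by (simp add: feistel_def zero_prod_def)

lemma feistel_inj: "inj (feistel (\<rho> :: 'v::group_add \<Rightarrow> 'v))"
  by (rule injI) (auto simp: feistel_def split: prod.splits)

lemma feistel_Pair [simp]: "feistel \<rho> (a, c) = (c, a + \<rho> c)"
  by (simp add: feistel_def)

lemma lin_partition_feistel_image:
  fixes \<rho> :: "'v::ab_group_add \<Rightarrow> 'v"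
  assumes "part_image (lin_partition U) (feistel \<rho>) = lin_partition U'"
    and "is_subgroup U" "is_subgroup U'" "\<rho> 0 = 0"
  shows "feistel \<rho> ` U = U'"
  using assms(1-3) by (rule part_image_lin_partition_image) (simp add: assms(4))

lemma feistel_derivative_mem:
  fixes \<rho> :: "'v::ab_group_add \<Rightarrow> 'v"
  assumes chain: "part_image (lin_partition U) (feistel \<rho>) = lin_partition U'"
    and U: "is_subgroup U" and U': "is_subgroup U'" and \<rho>0: "\<rho> 0 = 0"
    and ac: "(a, c) \<in> U"
  shows "(\<rho> (c + x) - \<rho> x - \<rho> c, 0) \<in> U"
proof -
  have img: "feistel \<rho> ` U = U'"
    using chain U U' \<rho>0 by (rule lin_partition_feistel_image)
  obtain w where w: "feistel \<rho> ` (\<lambda>u. u + (0, x)) ` U = (\<lambda>u. u + w) ` U'"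
    using chain by (rule part_image_lin_partition_translate)
  have "feistel \<rho> ((a, c) + (0, x)) \<in> (\<lambda>u. u + w) ` U'"
    using w ac by blast
  then obtain u1 where u1: "u1 \<in> U'" "(c + x, a + \<rho> (c + x)) = u1 + w"
    by auto
  have "feistel \<rho> (0 + (0, x)) \<in> (\<lambda>u. u + w) ` U'"
    using w is_subgroup_zero[OF U] by blast
  then obtain u2 where u2: "u2 \<in> U'" "(x, \<rho> x) = u2 + w"
    by auto
  have "(c, a + \<rho> c) \<in> U'"
    using img ac by force
  then have "(u1 - u2) - (c, a + \<rho> c) \<in> U'"
    using u1(1) u2(1) by (intro is_subgroup_diff[OF U'])
  also have "u1 - u2 = (c + x, a + \<rho> (c + x)) - (x, \<rho> x)"
    by (simp only: u1(2) u2(2) add_diff_cancel_right)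
  also have "\<dots> - (c, a + \<rho> c) = feistel \<rho> (\<rho> (c + x) - \<rho> x - \<rho> c, 0)"
    by (simp add: \<rho>0 algebra_simps)
  finally show ?thesis
    unfolding img[symmetric] by (rule inj_image_mem_iff[OF feistel_inj, THEN iffD1])
qed

definition zero_fibre_snd :: "('v \<times> 'v::zero) set \<Rightarrow> 'v set" where
  "zero_fibre_snd U = {b. (b, 0) \<in> U}"

lemma is_subgroup_zero_fibre:
  fixes U :: "('v::ab_group_add \<times> 'v) set"
  assumes "is_subgroup U"
  shows "is_subgroup (zero_fibre U)"
proof -
  have "zero_fibre U = Pair 0 -` U"
    by (auto simp: zero_fibre_def)
  moreover have "Modules.additive (Pair (0 :: 'v) :: 'v \<Rightarrow> 'v \<times> 'v)"
    by unfold_locales simp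
  ultimately show ?thesis
    using assms by (simp add: is_subgroup_vimage)
qed

lemma is_subgroup_zero_fibre_snd:
  fixes U :: "('v::ab_group_add \<times> 'v) set"
  assumes "is_subgroup U"
  shows "is_subgroup (zero_fibre_snd U)"
proof -
  have "zero_fibre_snd U = (\<lambda>b. (b, 0)) -` U"
    by (auto simp: zero_fibre_snd_def)
  moreover have "Modules.additive (\<lambda>b :: 'v. (b, 0 :: 'v))"
    by unfold_locales simp
  ultimately show ?thesis
    using assms by (simp add: is_subgroup_vimage)
qed

lemma is_subgroup_eq_UNIV_if_fibres:
  assumes "is_subgroup U" "zero_fibre U = UNIV" "zero_fibre_snd U = UNIV"
  shows "U = UNIV"
proof -
  have "(a, c) \<in> U" for a c
  proof -
    have "(a, 0) + (0, c) \<in> U"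
      using assms by (intro is_subgroup_add) (auto simp: zero_fibre_def zero_fibre_snd_def)
    then show ?thesis
      by simp
  qed
  then show ?thesis
    by (auto intro: prod.exhaust)
qed

lemma zero_fibre_snd_Times: "0 \<in> Q \<Longrightarrow> zero_fibre_snd (P \<times> Q) = P"
  by (auto simp: zero_fibre_snd_def)

lemma first_proj_feistel_image: "first_proj (feistel \<rho> ` U) = snd ` U"
  by (force simp: first_proj_def)

lemma zero_fibre_feistel_image:
  "\<rho> 0 = 0 \<Longrightarrow> zero_fibre (feistel \<rho> ` U) = zero_fibre_snd (U :: ('v::monoid_add \<times> 'v) set)"
  by (force simp: zero_fibre_def zero_fibre_snd_def)

lemma zero_fibre_snd_feistel_image:
  "zero_fibre_snd (feistel \<rho> ` U) = {c. (- \<rho> c, c) \<in> (U :: ('v::group_add \<times> 'v) set)}"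
proof -
  have "(c, 0) \<in> feistel \<rho> ` U \<longleftrightarrow> (- \<rho> c, c) \<in> U" for c
  proof
    assume "(c, 0) \<in> feistel \<rho> ` U"
    then obtain a where "(a, c) \<in> U" "a + \<rho> c = 0"
      by auto
    then show "(- \<rho> c, c) \<in> U"
      by (metis eq_neg_iff_add_eq_0)
  next
    assume "(- \<rho> c, c) \<in> U"
    then show "(c, 0) \<in> feistel \<rho> ` U"
      by (rule rev_image_eqI) simp
  qed
  then show ?thesis
    by (simp add: zero_fibre_snd_def)
qed

lemma first_proj_feistel_image_trivial:
  fixes U :: "('v::monoid_add \<times> 'v) set"
  assumes "first_proj U = {0}" "first_proj (feistel \<rho> ` U) = {0}"
  shows "U = {0}"
proof -
  have "U \<subseteq> first_proj U \<times> snd ` U"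
    by (force simp: first_proj_def)
  moreover have "U \<noteq> {}"
    using assms(1) by (auto simp: first_proj_def)
  ultimately show ?thesis
    using assms by (auto simp: first_proj_feistel_image zero_prod_def)
qed

lemma feistel_cycle_fibre_subset:
  fixes \<rho> \<sigma> :: "'v::ab_group_add \<Rightarrow> 'v"
  assumes U: "is_subgroup U" and cycle: "feistel \<sigma> ` feistel \<rho> ` U = U" and \<sigma>0: "\<sigma> 0 = 0"
  shows "\<rho> ` zero_fibre U \<subseteq> zero_fibre_snd U"
proof
  fix y assume "y \<in> \<rho> ` zero_fibre U"
  then obtain d where d: "(0, d) \<in> U" "y = \<rho> d"
    by (auto simp: zero_fibre_def)
  have "d \<in> zero_fibre (feistel \<sigma> ` feistel \<rho> ` U)"
    using d(1) cycle by (simp add: zero_fibre_def)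
  then have "(- \<rho> d, d) \<in> U"
    using \<sigma>0 by (simp add: zero_fibre_feistel_image zero_fibre_snd_feistel_image)
  then have "- ((- \<rho> d, d) - (0, d)) \<in> U"
    using d(1) by (intro is_subgroup_uminus[OF U] is_subgroup_diff[OF U])
  then show "y \<in> zero_fibre_snd U"
    by (simp add: zero_fibre_snd_def d(2))
qed

lemma image_eq_if_inj_on_cycle:
  assumes "finite B" "inj_on f A" "inj_on g B" "f ` A \<subseteq> B" "g ` B \<subseteq> A"
  shows "f ` A = B"
proof (rule card_seteq)
  have "finite A"
    using assms by (metis finite_imageD finite_subset)
  then show "card B \<le> card (f ` A)"
    using assms by (simp add: card_image card_inj_on_le)
qed (use assms in auto)

lemma feistel_cycle_fibre_image:
  fixes \<rho> \<sigma> :: "'v::{ab_group_add, finite} \<Rightarrow> 'v"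
  assumes U: "is_subgroup U" and U': "is_subgroup U'"
    and img: "feistel \<rho> ` U = U'" and img': "feistel \<sigma> ` U' = U"
    and "inj \<rho>" "inj \<sigma>" and \<rho>0: "\<rho> 0 = 0" and \<sigma>0: "\<sigma> 0 = 0"
  shows "\<rho> ` zero_fibre U = zero_fibre_snd U"
proof (rule image_eq_if_inj_on_cycle)
  have fibres': "zero_fibre U' = zero_fibre_snd U" "zero_fibre_snd U' = zero_fibre U"
    using zero_fibre_feistel_image[of \<rho> U, OF \<rho>0] zero_fibre_feistel_image[of \<sigma> U', OF \<sigma>0]
    by (simp_all add: img img')
  show "\<rho> ` zero_fibre U \<subseteq> zero_fibre_snd U"
    by (rule feistel_cycle_fibre_subset[where \<sigma> = \<sigma>]) (simp_all add: U \<sigma>0 img img')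
  have "\<sigma> ` zero_fibre U' \<subseteq> zero_fibre_snd U'"
    by (rule feistel_cycle_fibre_subset[where \<sigma> = \<rho>]) (simp_all add: U' \<rho>0 img img')
  then show "\<sigma> ` zero_fibre_snd U \<subseteq> zero_fibre U"
    by (simp add: fibres')
qed (simp_all add: inj_on_subset[OF \<open>inj \<rho>\<close> subset_UNIV] inj_on_subset[OF \<open>inj \<sigma>\<close> subset_UNIV])

lemma feistel_two_rounds_product:
  fixes \<rho> \<sigma> :: "'v::monoid_add \<Rightarrow> 'v"
  assumes \<rho>0: "\<rho> 0 = 0" and \<sigma>0: "\<sigma> 0 = 0" and "0 \<in> U"
    and U': "feistel \<rho> ` U = U'" and U'': "feistel \<sigma> ` U' = U''"
    and prod: "U = first_proj U \<times> zero_fibre U" "U' = first_proj U' \<times> zero_fibre U'"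
      "U'' = first_proj U'' \<times> zero_fibre U''"
  shows "U'' = U"
proof -
  have "0 \<in> U'"
    using \<open>0 \<in> U\<close> U' \<rho>0 by (metis feistel_zero image_eqI)
  then have zeros: "0 \<in> first_proj U" "0 \<in> zero_fibre U" "0 \<in> first_proj U'" "0 \<in> zero_fibre U'"
    using \<open>0 \<in> U\<close> prod by (metis mem_Sigma_iff zero_prod_def)+
  have "first_proj U'' = snd ` U'"
    by (simp add: first_proj_feistel_image flip: U'')
  also have "\<dots> = zero_fibre U'"
    using zeros by (subst prod(2)) auto
  also have "\<dots> = zero_fibre_snd U"
    by (simp add: \<rho>0 zero_fibre_feistel_image flip: U')
  also have "\<dots> = first_proj U"
    using zeros by (subst prod(1)) (simp add: zero_fibre_snd_Times)
  finally have fst: "first_proj U'' = first_proj U" .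
  have "zero_fibre U'' = zero_fibre_snd U'"
    by (simp add: \<sigma>0 zero_fibre_feistel_image flip: U'')
  also have "\<dots> = first_proj U'"
    using zeros by (subst prod(2)) (simp add: zero_fibre_snd_Times)
  also have "\<dots> = snd ` U"
    by (simp add: first_proj_feistel_image flip: U')
  also have "\<dots> = zero_fibre U"
    using zeros by (subst prod(1)) auto
  finally show ?thesis
    using fst prod(1,3) by simp
qed

section \<open>S-box layers\<close>

lemma weakly_uniform_derivative_card:
  fixes g :: "bit ^ 's::finite \<Rightarrow> bit ^ 's"
  assumes "weakly_uniform d g" "a \<noteq> 0"
  shows "real (card (range (\<lambda>x. g (a + x) + g x + g a))) > 2 ^ (CARD('s) - 1) / d"
proof -
  have "{g x + g (x + a) | x. True} = range (\<lambda>x. g x + g (x + a))"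
    by auto
  moreover have "range (\<lambda>x. g (a + x) + g x + g a) = (\<lambda>y. y + g a) ` range (\<lambda>x. g x + g (x + a))"
    unfolding image_image by (rule image_cong) (simp_all add: add_ac)
  ultimately have "range (\<lambda>x. g (a + x) + g x + g a) = (\<lambda>y. y + g a) ` {g x + g (x + a) | x. True}"
    by simp
  moreover have "inj (\<lambda>y. y + g a)"
    by (rule injI) simp
  ultimately have "card (range (\<lambda>x. g (a + x) + g x + g a)) = card {g x + g (x + a) | x. True}"
    by (simp add: card_image inj_on_subset)
  then show ?thesis
    using assms unfolding weakly_uniform_def by simp
qed

lemma strongly_anti_invariant_image_eq_UNIV:
  fixes g :: "bit ^ 's::finite \<Rightarrow> bit ^ 's"
  assumes g: "bij g" "strongly_anti_invariant \<delta> g" and \<delta>: "\<delta> < CARD('s)"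
    and U: "vec.subspace U" and W: "vec.subspace W" and img: "g ` U = W"
    and big: "real (card W) > 2 ^ (CARD('s) - 1) / 2 ^ \<delta>"
  shows "W = UNIV"
proof (rule ccontr)
  assume "W \<noteq> UNIV"
  have "card W \<le> 2 ^ (CARD('s) - 1 - \<delta>)"
  proof (cases "W = {0}")
    case False
    have "g 0 = 0"
      using g(2) by (simp add: strongly_anti_invariant_def)
    then have "U \<noteq> {0}"
      using False img by auto
    moreover have "U \<noteq> UNIV"
      using \<open>W \<noteq> UNIV\<close> img g(1) by (auto simp: bij_def)
    ultimately have "vec.dim W < CARD('s) - \<delta>"
      using g(2) U W False \<open>W \<noteq> UNIV\<close> img unfolding strongly_anti_invariant_def by blast
    then have "(2::nat) ^ vec.dim W \<le> 2 ^ (CARD('s) - 1 - \<delta>)"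
      by (intro power_increasing) auto
    then show ?thesis
      using card_subspace_le[OF W] by linarith
  qed simp
  then have "real (card W) \<le> 2 ^ (CARD('s) - 1 - \<delta>)"
    by (metis of_nat_le_iff of_nat_numeral of_nat_power)
  also have "\<dots> = 2 ^ (CARD('s) - 1) / 2 ^ \<delta>"
    using \<delta> by (simp add: power_diff)
  finally show False
    using big by linarith
qed

lemma subspace_axis_vimage:
  fixes S :: "(bit ^ 's::finite ^ 'b::finite) set"
  assumes "is_subgroup S"
  shows "vec.subspace (axis j -` S)"
proof (rule vec.subspaceI)
  have axis_zero: "axis j (0 :: bit ^ 's) = 0"
    by (simp add: vec_eq_iff axis_def)
  have axis_add: "axis j (x + y) = axis j x + axis j y" for x y :: "bit ^ 's"
    by (simp add: vec_eq_iff axis_def)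
  show "0 \<in> axis j -` S"
    using assms by (simp add: axis_zero is_subgroup_zero)
  show "x + y \<in> axis j -` S" if "x \<in> axis j -` S" "y \<in> axis j -` S" for x y
    using that assms by (simp add: axis_add is_subgroup_add)
  show "c *s x \<in> axis j -` S" if "x \<in> axis j -` S" for c x
    using that assms by (cases "c = 0") (simp_all add: axis_zero is_subgroup_zero)
qed

lemma wall_subset_if_axis_vimage_UNIV:
  fixes S :: "('a::ab_group_add ^ 'b::finite) set"
  assumes "is_subgroup S" "\<And>j. j \<in> J \<Longrightarrow> axis j -` S = UNIV"
  shows "wall J \<subseteq> S"
proof
  fix x :: "'a ^ 'b" assume "x \<in> wall J"
  then have "x = (\<Sum>j\<in>J. axis j (x $ j))"
    unfolding wall_def vec_eq_iff by (auto simp: axis_def)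
  also have "\<dots> \<in> S"
    using assms by (intro is_subgroup_sum) auto
  finally show "x \<in> S" .
qed

lemma parallel_axis:
  assumes "parallel_with f \<gamma>" "\<And>k. f k 0 = 0"
  shows "\<gamma> (axis j y) = axis j (f j y)"
  using assms by (simp add: parallel_with_def vec_eq_iff axis_def)

lemma parallel_derivative_axis:
  fixes \<gamma> :: "bit ^ 's::finite ^ 'b::finite \<Rightarrow> bit ^ 's ^ 'b"
  assumes "parallel_with f \<gamma>" "\<And>k. f k 0 = 0"
  shows "\<gamma> (c + axis j t) + \<gamma> (axis j t) + \<gamma> c = axis j (f j (c $ j + t) + f j t + f j (c $ j))"
  using assms by (simp add: parallel_with_def vec_eq_iff axis_def)

lemma parallel_axis_vimage_image:
  assumes par: "parallel_with f \<gamma>" and f0: "\<And>k. f k 0 = 0"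
  shows "f j ` (axis j -` D) = axis j -` (\<gamma> ` D)"
proof
  show "f j ` (axis j -` D) \<subseteq> axis j -` (\<gamma> ` D)"
    using parallel_axis[OF par f0] by (auto intro: sym)
  show "axis j -` (\<gamma> ` D) \<subseteq> f j ` (axis j -` D)"
  proof
    fix z assume "z \<in> axis j -` (\<gamma> ` D)"
    then obtain d where d: "d \<in> D" "axis j z = \<gamma> d"
      by auto
    have comp: "axis j z $ k = f k (d $ k)" for k
      using d(2) par by (simp add: parallel_with_def)
    have "d $ k = 0" if "k \<noteq> j" for k
    proof -
      have "f k (d $ k) = f k 0"
        using comp[of k] that f0 by (simp add: axis_def)
      then show ?thesis
        using par by (simp add: parallel_with_def bij_def inj_eq)
    qed
    then have "d = axis j (d $ j)"
      by (auto simp: vec_eq_iff axis_def)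
    moreover have "z = f j (d $ j)"
      using comp[of j] by simp
    ultimately show "z \<in> f j ` (axis j -` D)"
      using d(1) by (metis image_eqI vimageI)
  qed
qed

definition sbox_layer :: "(bit ^ 's::finite ^ 'b::finite \<Rightarrow> bit ^ 's ^ 'b) \<Rightarrow> bool" where
  "sbox_layer \<gamma> \<longleftrightarrow> (\<exists>f \<delta>. parallel_with f \<gamma> \<and> \<delta> < CARD('s) \<and>
     (\<forall>j. weakly_uniform (2 ^ \<delta>) (f j) \<and> strongly_anti_invariant \<delta> (f j)))"

lemma sbox_layer_bij: "sbox_layer \<gamma> \<Longrightarrow> bij \<gamma>"
  by (auto simp: sbox_layer_def parallel_with_def)

lemma sbox_layer_zero: "sbox_layer \<gamma> \<Longrightarrow> \<gamma> 0 = 0"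
  by (auto simp: sbox_layer_def parallel_with_def strongly_anti_invariant_def vec_eq_iff)

text \<open>By strong anti-invariance the image of the slice of D under the S-box is {0}, the
  whole brick, or of dimension below s - delta; the derivatives in direction c $ j make it too
  large for the first and the last.\<close>

lemma sbox_layer_fills_brick:
  fixes \<gamma> :: "bit ^ 's::finite ^ 'b::finite \<Rightarrow> bit ^ 's ^ 'b"
  assumes \<gamma>: "sbox_layer \<gamma>" and D: "is_subgroup D" and Z: "is_subgroup Z" and img: "\<gamma> ` D = Z"
    and deriv: "\<And>x. \<gamma> (c + x) + \<gamma> x + \<gamma> c \<in> Z" and cj: "c $ j \<noteq> 0"
  shows "axis j -` D = UNIV" "axis j -` Z = UNIV"
proof -
  obtain f \<delta> where par: "parallel_with f \<gamma>" and \<delta>: "\<delta> < CARD('s)"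
    and sbox: "\<And>j. weakly_uniform (2 ^ \<delta>) (f j) \<and> strongly_anti_invariant \<delta> (f j)"
    using \<gamma> unfolding sbox_layer_def by blast
  have f0: "f k 0 = 0" for k
    using sbox by (simp add: strongly_anti_invariant_def)
  have fj: "bij (f j)"
    using par by (simp add: parallel_with_def)
  have slice: "f j ` (axis j -` D) = axis j -` Z"
    using parallel_axis_vimage_image[OF par f0] img by simp
  have "range (\<lambda>t. f j (c $ j + t) + f j t + f j (c $ j)) \<subseteq> axis j -` Z"
  proof
    fix y assume "y \<in> range (\<lambda>t. f j (c $ j + t) + f j t + f j (c $ j))"
    then obtain t where "axis j y = \<gamma> (c + axis j t) + \<gamma> (axis j t) + \<gamma> c"
      using parallel_derivative_axis[OF par f0] by auto
    then show "y \<in> axis j -` Z"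
      using deriv by simp
  qed
  then have "real (card (axis j -` Z)) > 2 ^ (CARD('s) - 1) / 2 ^ \<delta>"
    using weakly_uniform_derivative_card[OF conjunct1[OF sbox] cj] card_mono[of "axis j -` Z"]
    by (meson finite less_le_trans of_nat_le_iff)
  then show Z_full: "axis j -` Z = UNIV"
    using strongly_anti_invariant_image_eq_UNIV[OF fj conjunct2[OF sbox] \<delta>]
      subspace_axis_vimage[OF D] subspace_axis_vimage[OF Z] slice by blast
  show "axis j -` D = UNIV"
    using slice fj Z_full by (metis bij_def inj_image_eq_iff surj_def)
qed

section \<open>Rounds of the Feistel network\<close>

lemma wall_empty [simp]: "wall {} = {0}"
  by (auto simp: wall_def vec_eq_iff)

lemma wall_UNIV [simp]: "wall UNIV = UNIV"
  by (simp add: wall_def)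

lemma strongly_proper_diffusion_wall_image:
  assumes "strongly_proper_diffusion L" "L ` wall J = wall J'"
  shows "J = {} \<or> J = UNIV \<or> J' = {} \<or> J' = UNIV"
  using assms unfolding strongly_proper_diffusion_def is_wall_def by blast

lemma strongly_proper_diffusion_additive:
  "strongly_proper_diffusion L \<Longrightarrow> Modules.additive L"
  unfolding strongly_proper_diffusion_def Vector_Spaces.linear_def
  by (intro Modules.additive.intro) (auto dest: module_hom.add)

definition spn_round :: "(bit ^ 's::finite ^ 'b::finite \<Rightarrow> bit ^ 's ^ 'b) \<Rightarrow> bool" where
  "spn_round \<rho> \<longleftrightarrow> (\<exists>L \<gamma>. \<rho> = L \<circ> \<gamma> \<and> sbox_layer \<gamma> \<and> strongly_proper_diffusion L)"

lemma spn_round_bij: "spn_round \<rho> \<Longrightarrow> bij \<rho>"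
  unfolding spn_round_def strongly_proper_diffusion_def
  by (auto intro: bij_comp sbox_layer_bij)

lemma spn_round_zero: "spn_round \<rho> \<Longrightarrow> \<rho> 0 = 0"
  unfolding spn_round_def
  by (auto simp: sbox_layer_zero additive.zero strongly_proper_diffusion_additive)

lemma spn_round_wall:
  fixes D B C :: "(bit ^ 's::finite ^ 'b::finite) set"
  assumes \<gamma>: "sbox_layer \<gamma>" and L: "strongly_proper_diffusion L"
    and D: "is_subgroup D" and B: "is_subgroup B" and img: "(L \<circ> \<gamma>) ` D = B" and "D \<subseteq> C"
    and deriv: "\<And>c x. c \<in> C \<Longrightarrow> L (\<gamma> (c + x)) + L (\<gamma> x) + L (\<gamma> c) \<in> B"
  shows "\<exists>J. D = wall J" "B = L ` D"
proof -
  have add: "Modules.additive L" and "bij L"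
    using L by (auto simp: strongly_proper_diffusion_def strongly_proper_diffusion_additive)
  define Z where "Z = L -` B"
  have Z: "is_subgroup Z"
    unfolding Z_def using add B by (rule is_subgroup_vimage)
  have "Z = L -` L ` \<gamma> ` D"
    using img by (simp add: Z_def image_comp)
  then have img_Z: "\<gamma> ` D = Z"
    using \<open>bij L\<close> by (simp add: bij_def inj_vimage_image_eq)
  have deriv_Z: "\<gamma> (c + x) + \<gamma> x + \<gamma> c \<in> Z" if "c \<in> C" for c x
    using deriv[OF that] by (simp add: Z_def additive.add[OF add])
  have full: "axis j -` D = UNIV \<and> axis j -` Z = UNIV" if "c \<in> C" "c $ j \<noteq> 0" for c j
    using sbox_layer_fills_brick[OF \<gamma> D Z img_Z deriv_Z[OF that(1)] that(2)] by blast
  define J where "J = {j. \<exists>c\<in>C. c $ j \<noteq> 0}"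
  have "D \<subseteq> wall J"
    using \<open>D \<subseteq> C\<close> by (auto simp: wall_def J_def)
  moreover have "wall J \<subseteq> D"
    by (rule wall_subset_if_axis_vimage_UNIV[OF D]) (use full in \<open>auto simp: J_def\<close>)
  ultimately have DJ: "D = wall J"
    by (rule antisym)
  have "wall J \<subseteq> Z"
    by (rule wall_subset_if_axis_vimage_UNIV[OF Z]) (use full in \<open>auto simp: J_def\<close>)
  have "inj \<gamma>"
    using sbox_layer_bij[OF \<gamma>] by (rule bij_is_inj)
  then have "card Z = card D"
    unfolding img_Z[symmetric] by (rule card_image[OF inj_on_subset, OF _ subset_UNIV])
  then have "Z = D"
    using card_subset_eq[of Z "wall J"] \<open>wall J \<subseteq> Z\<close> DJ by simp
  moreover have "B = L ` Z"
    using \<open>bij L\<close> by (simp add: Z_def bij_is_surj surj_image_vimage_eq)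
  ultimately show "\<exists>J. D = wall J" "B = L ` D"
    using DJ by auto
qed

lemma lin_partition_feistel_derivative:
  fixes U U' :: "((bit ^ 's::finite ^ 'b::finite) \<times> (bit ^ 's ^ 'b)) set"
  assumes "part_image (lin_partition U) (feistel \<rho>) = lin_partition U'"
    and "is_subgroup U" "is_subgroup U'" "\<rho> 0 = 0" "c \<in> snd ` U"
  shows "\<rho> (c + x) + \<rho> x + \<rho> c \<in> zero_fibre_snd U"
proof -
  obtain a where "(a, c) \<in> U"
    using assms(5) by force
  from feistel_derivative_mem[OF assms(1-4) this] show ?thesis
    by (simp add: zero_fibre_snd_def bit_vec_vec_diff_eq_add)
qed

lemma spn_round_derivative_nonzero:
  fixes \<rho> :: "bit ^ 's::finite ^ 'b::finite \<Rightarrow> bit ^ 's ^ 'b"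
  assumes "spn_round \<rho>" "c \<noteq> 0"
  shows "\<exists>x. \<rho> (c + x) + \<rho> x + \<rho> c \<noteq> 0"
proof (rule ccontr)
  assume "\<nexists>x. \<rho> (c + x) + \<rho> x + \<rho> c \<noteq> 0"
  then have deriv: "\<rho> (c + x) + \<rho> x + \<rho> c = 0" for x
    by blast
  obtain L \<gamma> where \<rho>: "\<rho> = L \<circ> \<gamma>" and \<gamma>: "sbox_layer \<gamma>" and L: "strongly_proper_diffusion L"
    using assms(1) unfolding spn_round_def by blast
  have add: "Modules.additive L" and "inj L"
    using L by (auto simp: strongly_proper_diffusion_def strongly_proper_diffusion_additive bij_def)
  have "L (\<gamma> (c + x) + \<gamma> x + \<gamma> c) = L 0" for x
    using deriv[of x] by (simp add: \<rho> additive.add[OF add] additive.zero[OF add])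
  then have deriv_0: "\<gamma> (c + x) + \<gamma> x + \<gamma> c \<in> {0}" for x
    using \<open>inj L\<close> by (simp add: inj_eq)
  have sg_0: "is_subgroup {0 :: bit ^ 's ^ 'b}"
    by (simp add: is_subgroup_def)
  have img_0: "\<gamma> ` {0} = {0}"
    by (simp add: sbox_layer_zero[OF \<gamma>])
  obtain j where "c $ j \<noteq> 0"
    using assms(2) by (auto simp: vec_eq_iff)
  then have "axis j -` {0 :: bit ^ 's ^ 'b} = UNIV"
    by (rule sbox_layer_fills_brick(2)[OF \<gamma> sg_0 sg_0 img_0 deriv_0])
  then have "y = 0" for y :: "bit ^ 's"
    by (metis UNIV_I axis_eq_0_iff singletonD vimageE)
  then show False
    using bit_vec_exists_nonzero by blast
qed

lemma zero_fibre_feistel_trivial: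
  fixes U U' :: "((bit ^ 's::finite ^ 'b::finite) \<times> (bit ^ 's ^ 'b)) set"
  assumes \<rho>: "spn_round \<rho>" and U: "is_subgroup U" and U': "is_subgroup U'"
    and chain: "part_image (lin_partition U) (feistel \<rho>) = lin_partition U'"
    and trivial: "zero_fibre U' = {0}"
  shows "U = {0}"
proof -
  have \<rho>0: "\<rho> 0 = 0"
    using \<rho> by (rule spn_round_zero)
  have "zero_fibre_snd U = {0}"
    using trivial zero_fibre_feistel_image[of \<rho> U, OF \<rho>0]
    unfolding lin_partition_feistel_image[OF chain U U' \<rho>0] by simp
  have "c = 0" if "(a, c) \<in> U" for a c
  proof (rule ccontr)
    assume "c \<noteq> 0"
    then obtain x where "\<rho> (c + x) + \<rho> x + \<rho> c \<noteq> 0"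
      using spn_round_derivative_nonzero[OF \<rho>] by blast
    moreover have "\<rho> (c + x) + \<rho> x + \<rho> c \<in> zero_fibre_snd U"
      using that by (intro lin_partition_feistel_derivative[OF chain U U' \<rho>0]) force
    ultimately show False
      using \<open>zero_fibre_snd U = {0}\<close> by simp
  qed
  have "U \<subseteq> {0}"
  proof
    fix u assume "u \<in> U"
    moreover obtain a c where u: "u = (a, c)"
      by (cases u)
    ultimately have "(a, 0) \<in> U"
      using \<open>\<And>a c. (a, c) \<in> U \<Longrightarrow> c = 0\<close> by blast
    then show "u \<in> {0}"
      using \<open>zero_fibre_snd U = {0}\<close> \<open>u \<in> U\<close> u \<open>\<And>a c. (a, c) \<in> U \<Longrightarrow> c = 0\<close>
      by (auto simp: zero_fibre_snd_def zero_prod_def)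
  qed
  then show ?thesis
    using is_subgroup_zero[OF U] by blast
qed

lemma lin_partition_feistel_fibre_wall:
  fixes U U' :: "((bit ^ 's::finite ^ 'b::finite) \<times> (bit ^ 's ^ 'b)) set"
  assumes \<gamma>: "sbox_layer \<gamma>" and L: "strongly_proper_diffusion L"
    and U: "is_subgroup U" and U': "is_subgroup U'"
    and chain: "part_image (lin_partition U) (feistel (L \<circ> \<gamma>)) = lin_partition U'"
    and img: "(L \<circ> \<gamma>) ` zero_fibre U = zero_fibre_snd U"
  shows "\<exists>J. zero_fibre U = wall J" "zero_fibre_snd U = L ` zero_fibre U"
proof -
  have "(L \<circ> \<gamma>) 0 = 0"
    using strongly_proper_diffusion_additive[OF L]
    by (simp add: sbox_layer_zero[OF \<gamma>] additive.zero)
  then have "(L \<circ> \<gamma>) (c + x) + (L \<circ> \<gamma>) x + (L \<circ> \<gamma>) c \<in> zero_fibre_snd U" if "c \<in> snd ` U" for c x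
    using that by (rule lin_partition_feistel_derivative[OF chain U U'])
  moreover have "zero_fibre U \<subseteq> snd ` U"
    by (force simp: zero_fibre_def)
  ultimately show "\<exists>J. zero_fibre U = wall J" "zero_fibre_snd U = L ` zero_fibre U"
    using spn_round_wall[OF \<gamma> L is_subgroup_zero_fibre[OF U] is_subgroup_zero_fibre_snd[OF U] img]
    by simp_all
qed

lemma lin_partition_feistel_no_cycle:
  fixes U U' :: "((bit ^ 's::finite ^ 'b::finite) \<times> (bit ^ 's ^ 'b)) set"
  assumes \<rho>: "spn_round \<rho>" and \<sigma>: "spn_round \<sigma>" and U: "is_subgroup U" and U': "is_subgroup U'"
    and "U \<noteq> {0}" "U \<noteq> UNIV"
    and chain: "part_image (lin_partition U) (feistel \<rho>) = lin_partition U'"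
    and chain': "part_image (lin_partition U') (feistel \<sigma>) = lin_partition U"
  shows False
proof -
  obtain L \<gamma> where \<rho>_eq: "\<rho> = L \<circ> \<gamma>" and \<gamma>: "sbox_layer \<gamma>" and L: "strongly_proper_diffusion L"
    using \<rho> unfolding spn_round_def by blast
  obtain L' \<gamma>' where \<sigma>_eq: "\<sigma> = L' \<circ> \<gamma>'" and \<gamma>': "sbox_layer \<gamma>'"
    and L': "strongly_proper_diffusion L'"
    using \<sigma> unfolding spn_round_def by blast
  have \<rho>0: "\<rho> 0 = 0" and \<sigma>0: "\<sigma> 0 = 0" and "bij \<rho>" "bij \<sigma>"
    using \<rho> \<sigma> by (simp_all add: spn_round_zero spn_round_bij)
  have img: "feistel \<rho> ` U = U'" and img': "feistel \<sigma> ` U' = U"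
    using lin_partition_feistel_image[OF chain U U' \<rho>0] lin_partition_feistel_image[OF chain' U' U \<sigma>0] .
  have fibres': "zero_fibre U' = zero_fibre_snd U" "zero_fibre_snd U' = zero_fibre U"
    using zero_fibre_feistel_image[of \<rho> U, OF \<rho>0] zero_fibre_feistel_image[of \<sigma> U', OF \<sigma>0]
    by (simp_all add: img img')
  have DB: "\<rho> ` zero_fibre U = zero_fibre_snd U"
    using feistel_cycle_fibre_image[OF U U' img img'] \<open>bij \<rho>\<close> \<open>bij \<sigma>\<close> \<rho>0 \<sigma>0
    by (simp add: bij_is_inj)
  have BD: "\<sigma> ` zero_fibre_snd U = zero_fibre U"
    using feistel_cycle_fibre_image[OF U' U img' img] \<open>bij \<rho>\<close> \<open>bij \<sigma>\<close> \<rho>0 \<sigma>0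
    by (simp add: bij_is_inj fibres')
  obtain J where D: "zero_fibre U = wall J"
    using lin_partition_feistel_fibre_wall(1)[OF \<gamma> L U U' chain[unfolded \<rho>_eq] DB[unfolded \<rho>_eq]] ..
  obtain J' where B: "zero_fibre_snd U = wall J'"
    using lin_partition_feistel_fibre_wall(1)[OF \<gamma>' L' U' U chain'[unfolded \<sigma>_eq]] BD[unfolded \<sigma>_eq]
    by (auto simp: fibres')
  have "L ` wall J = wall J'"
    using lin_partition_feistel_fibre_wall(2)[OF \<gamma> L U U' chain[unfolded \<rho>_eq] DB[unfolded \<rho>_eq]]
    by (simp add: D B)
  then have "J = {} \<or> J = UNIV \<or> J' = {} \<or> J' = UNIV"
    by (rule strongly_proper_diffusion_wall_image[OF L])
  moreover have "zero_fibre_snd U = {0}" if "zero_fibre U = {0}"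
    using DB \<rho>0 that by auto
  moreover have "zero_fibre U = UNIV \<longleftrightarrow> zero_fibre_snd U = UNIV"
    using DB BD \<open>bij \<rho>\<close> \<open>bij \<sigma>\<close> by (auto simp: bij_def)
  ultimately have "zero_fibre U' = {0} \<or> zero_fibre U = UNIV \<and> zero_fibre_snd U = UNIV"
    using D B fibres' by auto
  then show False
    using zero_fibre_feistel_trivial[OF \<rho> U U' chain] is_subgroup_eq_UNIV_if_fibres[OF U]
      \<open>U \<noteq> {0}\<close> \<open>U \<noteq> UNIV\<close> by blast
qed

lemma lin_partition_feistel_no_three_products:
  fixes U U' U'' :: "((bit ^ 's::finite ^ 'b::finite) \<times> (bit ^ 's ^ 'b)) set"
  assumes \<rho>: "spn_round \<rho>" and \<sigma>: "spn_round \<sigma>"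
    and U: "is_subgroup U" and U': "is_subgroup U'" and U'': "is_subgroup U''"
    and nontrivial: "U \<noteq> {0}" "U \<noteq> UNIV"
    and chain: "part_image (lin_partition U) (feistel \<rho>) = lin_partition U'"
    and chain': "part_image (lin_partition U') (feistel \<sigma>) = lin_partition U''"
    and products: "U = first_proj U \<times> zero_fibre U" "U' = first_proj U' \<times> zero_fibre U'"
      "U'' = first_proj U'' \<times> zero_fibre U''"
  shows False
proof -
  have \<rho>0: "\<rho> 0 = 0" and \<sigma>0: "\<sigma> 0 = 0"
    using \<rho> \<sigma> by (simp_all add: spn_round_zero)
  have "U'' = U"
    using \<rho>0 \<sigma>0 is_subgroup_zero[OF U] lin_partition_feistel_image[OF chain U U' \<rho>0]
      lin_partition_feistel_image[OF chain' U' U'' \<sigma>0] products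
    by (rule feistel_two_rounds_product)
  then show False
    using lin_partition_feistel_no_cycle[OF \<rho> \<sigma> U U' nontrivial chain] chain' by simp
qed

theorem theorem4p11:
  fixes r :: nat
    and \<rho> \<gamma> L :: "nat \<Rightarrow> bit ^ 's::finite ^ 'b::finite \<Rightarrow> bit ^ 's ^ 'b"
    and \<U> :: "nat \<Rightarrow> ((bit ^ 's ^ 'b) \<times> (bit ^ 's ^ 'b)) set"
  defines "A \<equiv> \<lambda>i. first_proj (\<U> i)"
    and "D \<equiv> \<lambda>i. zero_fibre (\<U> i)"
  assumes r: "r \<ge> 2"
    and rho_sym: "\<forall>i\<in>{1..r}. bij (\<rho> i)"
    and rho_zero: "\<forall>i\<in>{1..r}. \<rho> i 0 = 0"
    and rho_decomp: "\<forall>i\<in>{1..r}. \<rho> i = L i \<circ> \<gamma> i"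
    and gamma: "\<forall>i\<in>{1..r}. \<exists>\<delta>::nat. 1 \<le> \<delta> \<and> \<delta> < CARD('s) \<and>
                  (\<exists>f. parallel_with f (\<gamma> i) \<and>
                       (\<forall>j. weakly_uniform (2 ^ \<delta>) (f j) \<and> strongly_anti_invariant \<delta> (f j)))"
    and lambda: "\<forall>i\<in>{1..r}. strongly_proper_diffusion (L i)"
    and U_sub: "\<forall>i\<in>{1..r+1}. is_subgroup (\<U> i) \<and> \<U> i \<noteq> {0} \<and> \<U> i \<noteq> UNIV"
    and U_nontriv: "\<forall>i\<in>{1..r+1}. nontrivial_partition (lin_partition (\<U> i))"
    and U_chain: "\<forall>i\<in>{1..r}.
                    part_image (lin_partition (\<U> i)) (feistel (\<rho> i)) = lin_partition (\<U> (i + 1))"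
  shows "\<not> (\<exists>i\<in>{1..r-1}.
              part_image (lin_partition (\<U> (i + 1))) (feistel (\<rho> (i + 1))) = lin_partition (\<U> i))
       \<and> \<not> (\<exists>i\<in>{1..r-1}. \<U> i = A i \<times> D i \<and> \<U> (i + 1) = A (i + 1) \<times> D (i + 1)
                         \<and> \<U> (i + 2) = A (i + 2) \<times> D (i + 2))
       \<and> \<not> (\<exists>i\<in>{1..r}. D i = {0} \<and> D (i + 1) = {0})
       \<and> \<not> (\<exists>i\<in>{1..r}. A i = {0} \<and> A (i + 1) = {0})"
proof -
  (* bij (rho i) and rho i 0 = 0 follow from the decomposition (spn_round_bij, spn_round_zero). *)
  have round: "spn_round (\<rho> i)" if "i \<in> {1..r}" for i
    using that rho_decomp lambda gamma unfolding spn_round_def sbox_layer_def by fast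
  have sg: "is_subgroup (\<U> i)" "is_subgroup (\<U> (i + 1))" "\<U> i \<noteq> {0}" "\<U> i \<noteq> UNIV"
    if "i \<in> {1..r}" for i
    using U_sub that by auto
  have chain: "part_image (lin_partition (\<U> i)) (feistel (\<rho> i)) = lin_partition (\<U> (i + 1))"
    if "i \<in> {1..r}" for i
    using U_chain that by blast
  have img: "feistel (\<rho> i) ` \<U> i = \<U> (i + 1)" if "i \<in> {1..r}" for i
    using that by (intro lin_partition_feistel_image chain sg spn_round_zero round)
  have cycle: "\<not> (\<exists>i\<in>{1..r-1}.
    part_image (lin_partition (\<U> (i + 1))) (feistel (\<rho> (i + 1))) = lin_partition (\<U> i))"
  proof (intro notI, elim bexE)
    fix i assume "i \<in> {1..r-1}"
      and chain': "part_image (lin_partition (\<U> (i + 1))) (feistel (\<rho> (i + 1))) = lin_partition (\<U> i)"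
    then show False
      by (intro lin_partition_feistel_no_cycle[OF round round sg chain chain']) (use r in auto)
  qed
  have product: "\<U> k = first_proj (\<U> k) \<times> zero_fibre (\<U> k)" if "\<U> k = A k \<times> D k" for k
    using that unfolding A_def D_def .
  have "\<not> (\<exists>i\<in>{1..r-1}. \<U> i = A i \<times> D i \<and> \<U> (i + 1) = A (i + 1) \<times> D (i + 1)
                         \<and> \<U> (i + 2) = A (i + 2) \<times> D (i + 2))"
  proof (intro notI, elim bexE conjE)
    fix i assume "i \<in> {1..r-1}" and products: "\<U> i = A i \<times> D i"
      "\<U> (i + 1) = A (i + 1) \<times> D (i + 1)" "\<U> (i + 2) = A (i + 2) \<times> D (i + 2)"
    then have i: "i \<in> {1..r}" "i + 1 \<in> {1..r}" and "i + 2 = i + 1 + 1"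
      using r by auto
    show False
      using product[OF products(1)] product[OF products(2)]
        product[OF products(3)[unfolded \<open>i + 2 = i + 1 + 1\<close>]]
      by (rule lin_partition_feistel_no_three_products[OF round[OF i(1)] round[OF i(2)]
            sg(1,2)[OF i(1)] sg(2)[OF i(2)] sg(3,4)[OF i(1)] chain[OF i(1)] chain[OF i(2)]])
  qed
  moreover have "\<not> (\<exists>i\<in>{1..r}. D i = {0} \<and> D (i + 1) = {0})"
  proof (intro notI, elim bexE conjE)
    fix i assume i: "i \<in> {1..r}" and "D (i + 1) = {0}"
    then have "\<U> i = {0}"
      using zero_fibre_feistel_trivial[OF round[OF i] sg(1,2)[OF i] chain[OF i]] by (simp add: D_def)
    then show False
      using sg(3)[OF i] by simp
  qed
  moreover have "\<not> (\<exists>i\<in>{1..r}. A i = {0} \<and> A (i + 1) = {0})"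
  proof (intro notI, elim bexE conjE)
    fix i assume i: "i \<in> {1..r}" and "A i = {0}" "A (i + 1) = {0}"
    then have "\<U> i = {0}"
      using first_proj_feistel_image_trivial[of "\<U> i" "\<rho> i"] img[OF i] by (simp add: A_def)
    then show False
      using sg(3)[OF i] by simp
  qed
  ultimately show ?thesis
    using cycle by blast
qed

end
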